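(* Let $0<q<1$ and, for $x\in\mathcal{A}(S^2_q)$, let $\zeta_x(s)=\mathrm{Trace}_{\mathcal{H}}(\pi(x)|D|^{-s})$ for the spin representation $\pi$ and $D|l,m\rangle_\pm=(l+\tfrac12)|l,m\rangle_\mp$. Then $$\mathrm{Res}_{s=2}\zeta_x(s)=\frac{2}{\pi}\int_{S^1}\rho(x)\,\mathrm{d}\theta,$$ where $\rho:\mathcal{A}(S^2_q)\to C^\infty(S^1)$ is the $*$-algebra morphism with $\rho(a)(\theta)=e^{i\theta}$ and $\rho(b)=0$.
   Context: $\mathcal{A}(S^2_q)$ is the unital $*$-algebra generated by $a,a^*$ and $b=b^*$ with relations $ba=q^2ab$, $a^*a+b^2=1$, $q^4aa^*+b^2=q^4$. $\mathcal{H}=\mathcal{H}_+\oplus\mathcal{H}_-$, each $\mathcal{H}_\pm$ with orthonormal basis $|l,m\rangle_\pm$, $l\in\mathbb{N}+\tfrac12$, $m=-l,\dots,l$ (out-of-range vectors are $0$), and $\pi=\pi_+\oplus\pi_-$ with, using $[x]=(q^x-q^{-x})/(q-q^{-1})$: $\pi_\pm(a)|l,m\rangle_\pm=q^{m-l-\frac12}\frac{\sqrt{[l+m+1][l+m+2]}}{[2l+2]}|l+1,m+1\rangle_\pm-q^{m+l+\frac12}\frac{\sqrt{[l-m-1][l-m]}}{[2l]}|l-1,m+1\rangle_\pm\pm\frac{(1+q^2)q^{m-\frac12}}{[2l][2l+2]}\sqrt{[l+m+1][l-m]}\,|l,m+1\rangle_\pm$, $\pi_\pm(b)|l,m\rangle_\pm=-q^{m+1}\frac{\sqrt{[l+m+1][l-m+1]}}{[2l+2]}|l+1,m\rangle_\pm-q^{m+1}\frac{\sqrt{[l+m][l-m]}}{[2l]}|l-1,m\rangle_\pm\pm\frac{[l-m+1][l+m]-q^2[l-m][l+m+1]}{[2l][2l+2]}|l,m\rangle_\pm$.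 The function $\zeta_x$ is defined for $\mathrm{Re}\,s>2$ and extends meromorphically to $\mathbb{C}$. *)

theory Defs
  imports "HOL-Complex_Analysis.Complex_Analysis"
begin

text \<open>Basis vectors |l,m>_pm of H = H_+ (+) H_- are indexed by (s, n, k) with
  s = True for H_+, s = False for H_-, l = n + 1/2, m = k + 1/2.
  The vector exists iff -l <= m <= l, i.e. -n-1 <= k <= n.\<close>

type_synonym idx = "bool \<times> nat \<times> int"

definition valid :: "idx \<Rightarrow> bool" where
  "valid i = (case i of (s, n, k) \<Rightarrow> - int n - 1 \<le> k \<and> k \<le> int n)"

definition lval :: "idx \<Rightarrow> real" where
  "lval i = (case i of (s, n, k) \<Rightarrow> real n + 1/2)"

definition qnum :: "real \<Rightarrow> real \<Rightarrow> real" where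
  "qnum q x = (q powr x - q powr (-x)) / (q - inverse q)"

definition Ma :: "real \<Rightarrow> idx \<Rightarrow> idx \<Rightarrow> real" where
  "Ma q i j = (case i of (s', n', k') \<Rightarrow> case j of (s, n, k) \<Rightarrow>
     (let l = real n + 1/2; m = real_of_int k + 1/2; sg = (if s then 1 else -1::real) in
      if valid i \<and> valid j \<and> s' = s \<and> k' = k + 1 then
        (if n' = n + 1 then
           q powr (m - l - 1/2) * sqrt (qnum q (l+m+1) * qnum q (l+m+2)) / qnum q (2*l+2)
         else if n' + 1 = n then
           - (q powr (m + l + 1/2)) * sqrt (qnum q (l-m-1) * qnum q (l-m)) / qnum q (2*l)
         else if n' = n then
           sg * (1 + q^2) * q powr (m - 1/2) / (qnum q (2*l) * qnum q (2*l+2))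
              * sqrt (qnum q (l+m+1) * qnum q (l-m))
         else 0)
      else 0))"

definition Mb :: "real \<Rightarrow> idx \<Rightarrow> idx \<Rightarrow> real" where
  "Mb q i j = (case i of (s', n', k') \<Rightarrow> case j of (s, n, k) \<Rightarrow>
     (let l = real n + 1/2; m = real_of_int k + 1/2; sg = (if s then 1 else -1::real) in
      if valid i \<and> valid j \<and> s' = s \<and> k' = k then
        (if n' = n + 1 then
           - (q powr (m + 1)) * sqrt (qnum q (l+m+1) * qnum q (l-m+1)) / qnum q (2*l+2)
         else if n' + 1 = n then
           - (q powr (m + 1)) * sqrt (qnum q (l+m) * qnum q (l-m)) / qnum q (2*l)
         else if n' = n then
           sg * (qnum q (l-m+1) * qnum q (l+m) - q^2 * qnum q (l-m) * qnum q (l+m+1))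
              / (qnum q (2*l) * qnum q (2*l+2))
         else 0)
      else 0))"

datatype gen = GA | GAs | GB

text \<open>pi(a^*) = pi(a)^* (adjoint; coefficients are real).\<close>
definition Mgen :: "real \<Rightarrow> gen \<Rightarrow> idx \<Rightarrow> idx \<Rightarrow> real" where
  "Mgen q g i j = (case g of GA \<Rightarrow> Ma q i j | GAs \<Rightarrow> Ma q j i | GB \<Rightarrow> Mb q i j)"

text \<open>Indices j that can have a nonzero coefficient <i|pi(g)|j>.\<close>
definition nbr :: "idx \<Rightarrow> idx set" where
  "nbr i = (case i of (s, n, k) \<Rightarrow>
     {(s, n', k') | n' k'. n' \<le> n + 1 \<and> n \<le> n' + 1 \<and> k - 1 \<le> k' \<and> k' \<le> k + 1})"

definition apply_gen :: "real \<Rightarrow> gen \<Rightarrow> (idx \<Rightarrow> complex) \<Rightarrow> idx \<Rightarrow> complex" where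
  "apply_gen q g v = (\<lambda>i. \<Sum>j\<in>nbr i. complex_of_real (Mgen q g i j) * v j)"

definition apply_word :: "real \<Rightarrow> gen list \<Rightarrow> (idx \<Rightarrow> complex) \<Rightarrow> idx \<Rightarrow> complex" where
  "apply_word q w v = foldr (apply_gen q) w v"

definition basis :: "idx \<Rightarrow> idx \<Rightarrow> complex" where
  "basis i = (\<lambda>j. if j = i then 1 else 0)"

text \<open>Elements of A(S^2_q) are represented by noncommutative polynomials in a, a^*, b
  (finite linear combinations of words); both pi and rho respect the defining relations.\<close>
type_synonym ncpoly = "(complex \<times> gen list) list"

definition pi_entry :: "real \<Rightarrow> ncpoly \<Rightarrow> idx \<Rightarrow> idx \<Rightarrow> complex" where
  "pi_entry q x i j = (\<Sum>(c, w)\<leftarrow>x. c * apply_word q w (basis j) i)"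

definition zeta :: "real \<Rightarrow> ncpoly \<Rightarrow> complex \<Rightarrow> complex" where
  "zeta q x s = infsum (\<lambda>i. pi_entry q x i i * (complex_of_real (lval i + 1/2)) powr (- s))
                  {i. valid i}"

definition rho_gen :: "gen \<Rightarrow> real \<Rightarrow> complex" where
  "rho_gen g \<theta> = (case g of GA \<Rightarrow> exp (\<i> * of_real \<theta>) | GAs \<Rightarrow> exp (- \<i> * of_real \<theta>) | GB \<Rightarrow> 0)"

definition rho :: "ncpoly \<Rightarrow> real \<Rightarrow> complex" where
  "rho x \<theta> = (\<Sum>(c, w)\<leftarrow>x. c * (\<Prod>g\<leftarrow>w. rho_gen g \<theta>))"

end

theory Submission
  imports Defs
begin

text \<open>
  As \<open>l + m\<close> grows, every matrix coefficient of \<open>\<pi>(a)\<close>, \<open>\<pi>(a\<^sup>*)\<close>, \<open>\<pi>(b)\<close> at \<open>|l,m\<rangle>\<close>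
  differs by \<open>O(q\<^bsup>l+m\<^esup>)\<close> from its limit: \<open>\<pi>(a)\<close> becomes the shift
  \<open>|l,m\<rangle> \<mapsto> |l+1,m+1\<rangle>\<close>, \<open>\<pi>(a\<^sup>*)\<close> its adjoint and \<open>\<pi>(b)\<close> zero. Hence for a word \<open>w\<close>
  the diagonal entry \<open>\<langle>l,m|\<pi>(w)|l,m\<rangle>\<close> is, up to \<open>O(q\<^bsup>l+m\<^esup>)\<close>, equal to \<open>1\<close> if \<open>w\<close>
  contains no \<open>b\<close> and as many \<open>a\<close> as \<open>a\<^sup>*\<close>, and \<open>0\<close> otherwise; this constant is the mean
  of \<open>\<rho>(w)\<close> over the circle. Summing over the \<open>4(n+1)\<close> vectors with \<open>l = n + 1/2\<close>,
  on which \<open>|D| = n + 1\<close>, the errors stay bounded uniformly in \<open>n\<close>, so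
  \<open>\<zeta>\<^sub>x(s) = 4 mean(\<rho>(x)) \<zeta>(s - 1) + \<Sum>\<^sub>n E\<^sub>n (n+1)\<^bsup>-s\<^esup>\<close> with bounded \<open>E\<^sub>n\<close>.
  The last series is holomorphic near \<open>s = 2\<close>, and \<open>\<zeta>(s - 1)\<close> has a simple pole there
  with residue \<open>1\<close>; so the residue is \<open>4 mean(\<rho>(x)) = (2/\<pi>) \<integral> \<rho>(x)\<close>.
\<close>

lemma sums_infsum_finite_blocks:
  fixes f :: "'a \<Rightarrow> 'b::banach" and B :: "nat \<Rightarrow> 'a set"
  assumes fin: "\<And>n. finite (B n)" and disj: "disjoint_family B"
    and summable: "summable (\<lambda>n. \<Sum>j\<in>B n. norm (f j))"
  shows "(\<lambda>n. \<Sum>j\<in>B n. f j) sums infsum f (\<Union>n. B n)"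
proof -
  have "(\<lambda>j. norm (f j)) summable_on (\<Union>n. B n)"
  proof (rule summable_on_UnionI)
    show "((\<lambda>j. norm (f j)) has_sum (\<Sum>j\<in>B n. norm (f j))) (B n)" for n
      using fin by (rule has_sum_finite)
    show "(\<lambda>n. \<Sum>j\<in>B n. norm (f j)) summable_on UNIV"
      using summable by (simp add: summable_on_UNIV_nonneg_real_iff sum_nonneg)
  qed (use disj in auto)
  then have "f summable_on (\<Union>n. B n)"
    by (rule abs_summable_summable)
  then have "((f \<circ> snd) has_sum infsum f (\<Union>n. B n)) (Sigma UNIV B)"
    using disj by (subst has_sum_reindex[symmetric])
      (auto simp: inj_on_def disjoint_family_on_def snd_image_Sigma has_sum_infsum)
  then have "((\<lambda>n. \<Sum>j\<in>B n. f j) has_sum infsum f (\<Union>n. B n)) UNIV"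
    by (rule has_sum_Sigma[OF isUCont_plus]) (simp add: fin has_sum_finite)
  then show ?thesis
    by (rule has_sum_imp_sums)
qed

lemma holomorphic_on_sums_dominated:
  fixes h :: "nat \<Rightarrow> complex \<Rightarrow> complex"
  assumes S: "open S" and hol: "\<And>n. h n holomorphic_on S" and c: "summable c"
    and bound: "\<And>n s. s \<in> S \<Longrightarrow> norm (h n s) \<le> c n"
  obtains F where "F holomorphic_on S" "\<And>s. s \<in> S \<Longrightarrow> (\<lambda>n. h n s) sums F s"
proof -
  have "\<And>n s. s \<in> S \<Longrightarrow> (h n has_field_derivative deriv (h n) s) (at s)"
    using holomorphic_derivI[OF hol S] by blast
  then obtain F F' where F: "\<forall>s\<in>S. ((\<lambda>n. h n s) sums F s) \<and> ((\<lambda>n. deriv (h n) s) sums F' s)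
                                    \<and> (F has_field_derivative F' s) (at s)"
    using series_and_derivative_comparison[OF S c _ always_eventually] bound by metis
  then have "F holomorphic_on S"
    using S by (auto simp: holomorphic_on_open)
  then show ?thesis
    using F that by blast
qed

lemma residue_simple_pole_add_holomorphic:
  assumes "open S" "z \<in> S" "G holomorphic_on S" "F holomorphic_on S"
  shows "residue (\<lambda>w. G w / (w - z) + F w) z = G z"
proof -
  have "residue (\<lambda>w. G w / (w - z) + F w) z = residue (\<lambda>w. G w / (w - z)) z + residue F z"
    using assms by (intro residue_add) (auto intro!: holomorphic_intros intro: holomorphic_on_subset)
  also have "residue (\<lambda>w. G w / (w - z)) z = G z"
    using assms by (intro residue_simple) auto
  also have "residue F z = 0"
    using assms by (intro residue_holo)
  finally show ?thesis
    by simp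
qed

lemma summable_shifted_powr: "c < -1 \<Longrightarrow> summable (\<lambda>n. (real n + 1) powr c)"
  using summable_real_powr_iff[of c] summable_Suc_iff[of "\<lambda>n. real n powr c"]
  by (simp add: add.commute)

lemma norm_of_real_powr: "0 < r \<Longrightarrow> norm (complex_of_real r powr z) = r powr Re z"
  by (simp add: norm_powr_real_powr)

lemma norm_shifted_powr: "norm (complex_of_real (real n + 1) powr z) = (real n + 1) powr Re z"
  by (rule norm_of_real_powr) simp

lemma Re_gt_three_halves: "s \<in> ball 2 (1/2) \<Longrightarrow> 3/2 < Re s"
  using abs_Re_le_cmod[of "2 - s"] by (simp add: dist_norm)

section \<open>The simple pole of \<open>\<zeta>(s - 1)\<close> at \<open>s = 2\<close>\<close>

text \<open>The Taylor remainder of \<open>t\<^bsup>2-s\<^esup>\<close> between \<open>n + 1\<close> and \<open>n + 2\<close>. For \<open>Re s > 2\<close> its sum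
  telescopes to \<open>(s - 2) \<zeta>(s - 1) - 1\<close>, while near \<open>s = 2\<close> it is \<open>O(n\<^bsup>-3/2\<^esup>)\<close> uniformly.\<close>

definition powr_remainder :: "nat \<Rightarrow> complex \<Rightarrow> complex" where
  "powr_remainder n s = of_real (real n + 2) powr (2 - s) - of_real (real n + 1) powr (2 - s)
                          - (2 - s) * of_real (real n + 1) powr (1 - s)"

lemma norm_powr_second_derivative_le:
  fixes s :: complex and a t :: real
  assumes s: "s \<in> ball 2 (1/2)" and "1 \<le> a" "0 \<le> t"
  shows "norm ((2 - s) * (1 - s) * of_real (a + t) powr (- s)) \<le> a powr (-3/2)"
proof -
  have "norm (2 - s) \<le> 1/2" "norm (1 - s) \<le> 3/2"
    using s norm_triangle_ineq[of "-1" "2 - s"] by (auto simp: dist_norm)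
  then have "norm (2 - s) * norm (1 - s) \<le> 1/2 * (3/2)"
    by (intro mult_mono) auto
  moreover have "norm (of_real (a + t) powr (- s)) = (a + t) powr (- Re s)"
    using assms norm_of_real_powr[of "a + t" "- s"] by simp
  moreover have "(a + t) powr (- Re s) \<le> a powr (- Re s)"
    using assms Re_gt_three_halves[OF s] by (intro powr_mono2') auto
  moreover have "a powr (- Re s) \<le> a powr (-3/2)"
    using assms Re_gt_three_halves[OF s] by (intro powr_mono) auto
  ultimately show ?thesis
    unfolding norm_mult using mult_mono[of "norm (2 - s) * norm (1 - s)" 1 "(a + t) powr (- Re s)" "a powr (-3/2)"]
    by simp
qed

lemma norm_powr_remainder_le:
  assumes s: "s \<in> ball 2 (1/2)"
  shows "norm (powr_remainder n s) \<le> (real n + 1) powr (-3/2)"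
proof -
  define a where "a = real n + 1"
  define f where "f i z = (\<Prod>j<i. 2 - s - of_nat j) * (of_real a + z) powr (2 - s - of_nat i)"
    for i :: nat and z :: complex
  define S where "S = closed_segment 0 (1::complex)"
  have S: "z \<in> S \<Longrightarrow> of_real a + z = of_real (a + Re z) \<and> 0 \<le> Re z" for z
    unfolding S_def closed_segment_def by (auto simp: scaleR_conv_of_real)
  have "(f i has_field_derivative f (Suc i) z) (at z within S)" if "z \<in> S" for i z
  proof -
    have "of_real a + z \<notin> \<real>\<^sub>\<le>\<^sub>0"
      using S[OF that] by (auto simp: a_def complex_nonpos_Reals_iff)
    then show ?thesis
      unfolding f_def by (auto intro!: derivative_eq_intros simp: algebra_simps)
  qed
  moreover have "norm (f (Suc 1) z) \<le> a powr (-3/2)" if "z \<in> S" for z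
    using norm_powr_second_derivative_le[OF s, of a "Re z"] S[OF that] unfolding f_def a_def by simp
  ultimately have "norm (f 0 1 - (\<Sum>i\<le>1. f i 0 * (1 - 0) ^ i / fact i))
                    \<le> a powr (-3/2) * norm (1 - 0::complex) ^ Suc 1 / fact 1"
    by (intro field_Taylor[of S 1 f]) (auto simp: S_def)
  moreover have "powr_remainder n s = f 0 1 - (\<Sum>i\<le>1. f i 0 * (1 - 0) ^ i / fact i)"
    unfolding powr_remainder_def f_def by (simp add: a_def add.commute)
  ultimately show ?thesis
    by (simp add: a_def)
qed

lemma summable_shifted_cpowr: "1 < Re s \<Longrightarrow> summable (\<lambda>n. of_real (real n + 1) powr (- s))"
  by (rule summable_norm_cancel) (unfold norm_shifted_powr, rule summable_shifted_powr, simp)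

lemma powr_remainder_sums:
  assumes s: "2 < Re s"
  shows "(\<lambda>n. powr_remainder n s) sums ((s - 2) * (\<Sum>n. of_real (real n + 1) powr (1 - s)) - 1)"
proof -
  define u where "u n = of_real (real n + 1) powr (2 - s)" for n
  have "(\<lambda>n. of_real (real n + 1) powr (1 - s)) sums (\<Sum>n. of_real (real n + 1) powr (1 - s))"
    using summable_shifted_cpowr[of "s - 1"] s by (intro summable_sums) simp
  moreover have "u \<longlonglongrightarrow> 0"
    using tendsto_neg_powr_complex_of_nat[OF filterlim_Suc, of "2 - s"] s
    unfolding u_def by (simp add: add.commute)
  ultimately have "(\<lambda>n. (s - 2) * of_real (real n + 1) powr (1 - s) + (u (Suc n) - u n))
                     sums ((s - 2) * (\<Sum>n. of_real (real n + 1) powr (1 - s)) + (0 - u 0))"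
    by (intro sums_add sums_mult telescope_sums)
  moreover have "(\<lambda>n. (s - 2) * of_real (real n + 1) powr (1 - s) + (u (Suc n) - u n)) = (\<lambda>n. powr_remainder n s)"
    by (auto simp: powr_remainder_def u_def algebra_simps)
  moreover have "u 0 = 1"
    by (simp add: u_def)
  ultimately show ?thesis
    by simp
qed

lemma shifted_zeta_pole:
  obtains G where "G holomorphic_on ball 2 (1/2)" "G 2 = 0"
    "\<And>s. s \<in> ball 2 (1/2) \<Longrightarrow> 2 < Re s \<Longrightarrow>
       (\<lambda>n. of_real (real n + 1) powr (1 - s)) sums ((1 + G s) / (s - 2))"
proof -
  have holomorphic: "powr_remainder n holomorphic_on ball 2 (1/2)" for n
    unfolding powr_remainder_def by (intro holomorphic_intros)
  have summable: "summable (\<lambda>n. (real n + 1) powr (-3/2))"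
    by (rule summable_shifted_powr) simp
  obtain G where G: "G holomorphic_on ball 2 (1/2)"
    "\<And>s. s \<in> ball 2 (1/2) \<Longrightarrow> (\<lambda>n. powr_remainder n s) sums G s"
    using holomorphic_on_sums_dominated[OF open_ball holomorphic summable norm_powr_remainder_le] by metis
  have "(\<lambda>n. powr_remainder n 2) sums 0"
    by (simp add: powr_remainder_def del: of_real_add)
  then have "G 2 = 0"
    using G(2)[of 2] sums_unique2 by simp
  moreover have "(\<lambda>n. of_real (real n + 1) powr (1 - s)) sums ((1 + G s) / (s - 2))"
    if s: "s \<in> ball 2 (1/2)" "2 < Re s" for s
  proof -
    have "G s = (s - 2) * (\<Sum>n. of_real (real n + 1) powr (1 - s)) - 1"
      using G(2)[OF s(1)] powr_remainder_sums[OF s(2)] sums_unique2 by blast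
    moreover have "s - 2 \<noteq> 0"
      using s(2) by auto
    ultimately have "(\<Sum>n. of_real (real n + 1) powr (1 - s)) = (1 + G s) / (s - 2)"
      by (simp add: eq_divide_eq)
    then show ?thesis
      using summable_shifted_cpowr[of "s - 1"] s(2) summable_sums by fastforce
  qed
  ultimately show ?thesis
    using G(1) that by blast
qed

section \<open>Estimates for \<open>q\<close>-numbers\<close>

lemma one_minus_square_pos: "0 < (q::real) \<Longrightarrow> q < 1 \<Longrightarrow> 0 < 1 - q\<^sup>2"
  by (simp add: abs_square_less_1)

lemma one_minus_square_div_le:
  fixes q c :: real
  assumes "0 < q" "q < 1" "0 \<le> c" "c \<le> 3"
  shows "c / (1 - q\<^sup>2) \<le> 3 / (1 - q\<^sup>2)\<^sup>2"
proof -
  have "0 < 1 - q\<^sup>2" "1 - q\<^sup>2 \<le> 1"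
    using one_minus_square_pos[OF assms(1,2)] by auto
  then have "c / (1 - q\<^sup>2) \<le> 3 / (1 - q\<^sup>2)"
    using assms by (simp add: divide_right_mono)
  also have "\<dots> \<le> 3 / (1 - q\<^sup>2)\<^sup>2"
    using \<open>0 < 1 - q\<^sup>2\<close> \<open>1 - q\<^sup>2 \<le> 1\<close>
    by (intro divide_left_mono) (auto simp: power2_eq_square mult_left_le_one_le)
  finally show ?thesis .
qed

lemma qnum_minus: "qnum q (- x) = - qnum q x"
  unfolding qnum_def by (simp add: minus_divide_left)

lemma qnum_eq:
  assumes "0 < q" "q < 1"
  shows "qnum q x = q powr (1 - x) * (1 - q powr (2 * x)) / (1 - q\<^sup>2)"
proof -
  have "qnum q x = (q powr (- x) - q powr x) / (inverse q - q)"
    unfolding qnum_def by (metis minus_diff_eq minus_divide_divide)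
  also have "\<dots> = q * (q powr (- x) - q powr x) / (q * (inverse q - q))"
    using assms by simp
  also have "q * (q powr (- x) - q powr x) = q powr (1 - x) * (1 - q powr (2 * x))"
    using assms by (simp add: algebra_simps powr_diff powr_minus powr_add[symmetric] field_simps)
  also have "q * (inverse q - q) = 1 - q\<^sup>2"
    using assms by (simp add: field_simps power2_eq_square)
  finally show ?thesis .
qed

lemma abs_qnum_le:
  assumes "0 < q" "q < 1"
  shows "\<bar>qnum q x\<bar> \<le> q powr (1 - \<bar>x\<bar>) / (1 - q\<^sup>2)"
proof -
  have "\<bar>qnum q y\<bar> \<le> q powr (1 - y) / (1 - q\<^sup>2)" if "0 \<le> y" for y
  proof -
    have "0 \<le> 1 - q powr (2 * y)" "1 - q powr (2 * y) \<le> 1"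
      using assms that by (auto intro: powr_le1)
    then show ?thesis
      using assms one_minus_square_pos[OF assms]
      by (simp add: qnum_eq abs_mult divide_right_mono mult_left_le)
  qed
  from this[of "\<bar>x\<bar>"] show ?thesis
    by (cases "0 \<le> x") (simp_all add: qnum_minus)
qed

lemma qnum_ge:
  assumes "0 < q" "q < 1" "1 \<le> x"
  shows "q powr (1 - x) \<le> qnum q x"
proof -
  have "q powr (2 * x) \<le> q\<^sup>2"
    using assms powr_mono'[of 2 "2 * x" q] by (simp add: powr_numeral)
  then have "1 - q\<^sup>2 \<le> 1 - q powr (2 * x)" by simp
  then show ?thesis
    using assms one_minus_square_pos[of q] by (simp add: qnum_eq le_divide_eq mult_left_mono)
qed

lemma abs_qnum_mult_le:
  assumes "0 < q" "q < 1"
  shows "\<bar>qnum q x * qnum q y\<bar> \<le> q powr (2 - \<bar>x\<bar> - \<bar>y\<bar>) / (1 - q\<^sup>2)\<^sup>2"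
proof -
  have "\<bar>qnum q x * qnum q y\<bar> \<le> q powr (1 - \<bar>x\<bar>) / (1 - q\<^sup>2) * (q powr (1 - \<bar>y\<bar>) / (1 - q\<^sup>2))"
    unfolding abs_mult using assms one_minus_square_pos[OF assms] by (intro mult_mono abs_qnum_le) auto
  also have "\<dots> = q powr ((1 - \<bar>x\<bar>) + (1 - \<bar>y\<bar>)) / (1 - q\<^sup>2)\<^sup>2"
    by (simp only: powr_add power2_eq_square times_divide_times_eq)
  also have "(1 - \<bar>x\<bar>) + (1 - \<bar>y\<bar>) = 2 - \<bar>x\<bar> - \<bar>y\<bar>"
    by simp
  finally show ?thesis .
qed

lemma abs_sqrt_qnum_mult_le:
  assumes "0 < q" "q < 1"
  shows "\<bar>sqrt (qnum q x * qnum q y)\<bar> \<le> q powr (1 - (\<bar>x\<bar> + \<bar>y\<bar>) / 2) / (1 - q\<^sup>2)"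
proof -
  have "2 - \<bar>x\<bar> - \<bar>y\<bar> = (1 - (\<bar>x\<bar> + \<bar>y\<bar>) / 2) + (1 - (\<bar>x\<bar> + \<bar>y\<bar>) / 2)"
    by simp
  then have "(q powr (1 - (\<bar>x\<bar> + \<bar>y\<bar>) / 2))\<^sup>2 = q powr (2 - \<bar>x\<bar> - \<bar>y\<bar>)"
    by (simp only: powr_add power2_eq_square)
  then have "\<bar>qnum q x * qnum q y\<bar> \<le> (q powr (1 - (\<bar>x\<bar> + \<bar>y\<bar>) / 2) / (1 - q\<^sup>2))\<^sup>2"
    using abs_qnum_mult_le[OF assms] by (simp add: power_divide)
  then have "sqrt \<bar>qnum q x * qnum q y\<bar> \<le> \<bar>q powr (1 - (\<bar>x\<bar> + \<bar>y\<bar>) / 2) / (1 - q\<^sup>2)\<bar>"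
    using real_sqrt_le_mono by fastforce
  then show ?thesis
    using one_minus_square_pos[OF assms] by (simp add: real_sqrt_abs')
qed

lemma qnum_mult_ge:
  assumes "0 < q" "q < 1" "1/2 \<le> l"
  shows "q powr (- 4 * l) \<le> qnum q (2 * l) * qnum q (2 * l + 2)"
proof -
  have "q powr (- 4 * l) = q powr (1 - 2 * l) * q powr (1 - (2 * l + 2))"
    by (simp add: powr_add[symmetric])
  also have "\<dots> \<le> qnum q (2 * l) * qnum q (2 * l + 2)"
  proof (rule mult_mono)
    show "q powr (1 - 2 * l) \<le> qnum q (2 * l)"
      using assms by (intro qnum_ge) auto
    then show "0 \<le> qnum q (2 * l)"
      by (meson order_trans powr_ge_zero)
    show "q powr (1 - (2 * l + 2)) \<le> qnum q (2 * l + 2)"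
      using assms by (intro qnum_ge) auto
  qed simp
  finally show ?thesis .
qed

lemma abs_powr_sqrt_qnum_mult_le:
  assumes "0 < q" "q < 1"
  shows "\<bar>q powr e * sqrt (qnum q x * qnum q y)\<bar>
           \<le> 1 / (1 - q\<^sup>2) * q powr (e + 1 - (\<bar>x\<bar> + \<bar>y\<bar>) / 2)"
proof -
  have "\<bar>q powr e * sqrt (qnum q x * qnum q y)\<bar> = q powr e * \<bar>sqrt (qnum q x * qnum q y)\<bar>"
    by (simp add: abs_mult)
  also have "\<dots> \<le> q powr e * (q powr (1 - (\<bar>x\<bar> + \<bar>y\<bar>) / 2) / (1 - q\<^sup>2))"
    by (rule mult_left_mono[OF abs_sqrt_qnum_mult_le[OF assms]]) simp
  also have "\<dots> = 1 / (1 - q\<^sup>2) * q powr (e + (1 - (\<bar>x\<bar> + \<bar>y\<bar>) / 2))"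
    by (simp add: powr_add)
  finally show ?thesis by (simp add: add_diff_eq)
qed

lemma abs_divide_le_powr:
  fixes q :: real
  assumes "0 < q" "q < 1" "q powr b \<le> D" "\<bar>N\<bar> \<le> c * q powr a" "p \<le> a - b"
  shows "\<bar>N / D\<bar> \<le> c * q powr p"
proof -
  have "0 < q powr a" "0 < q powr b"
    using assms(1) by simp_all
  then have "0 < D" "0 \<le> c"
    using assms(3) order_trans[OF abs_ge_zero assms(4)] by (linarith, simp add: zero_le_mult_iff)
  have "\<bar>N / D\<bar> \<le> c * q powr a / q powr b"
    using assms \<open>0 < D\<close> \<open>0 \<le> c\<close> by (simp add: abs_div frac_le)
  also have "\<dots> = c * q powr (a - b)"
    by (simp add: powr_diff)
  also have "\<dots> \<le> c * q powr p"
    using assms \<open>0 \<le> c\<close> by (intro mult_left_mono powr_mono') auto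
  finally show ?thesis .
qed

lemma abs_sqrt_mult_minus_le:
  fixes x y z :: real
  assumes "0 \<le> x" "x \<le> 1" "0 \<le> y" "y \<le> 1" "z \<le> 1"
  shows "\<bar>sqrt (x * y) - z\<bar> \<le> (1 - x) + (1 - y) + (1 - z)"
proof -
  have "x * y \<le> 1" using assms by (simp add: mult_le_one)
  then have "x * y \<le> sqrt (x * y)" "sqrt (x * y) \<le> 1"
    using assms by (auto intro!: real_le_rsqrt simp: power2_eq_square mult_left_le)
  moreover have "1 - x * y \<le> (1 - x) + (1 - y)"
    using assms mult_nonneg_nonneg[of "1 - x" "1 - y"] by (simp add: algebra_simps)
  ultimately show ?thesis
    using assms unfolding abs_le_iff by linarith
qed

text \<open>The coefficients of \<open>|l+1,m+1\<rangle>\<close>, \<open>|l-1,m+1\<rangle>\<close>, \<open>|l,m+1\<rangle>\<close> in \<open>\<pi>(a)|l,m\<rangle>\<close> and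
  of \<open>|l+1,m\<rangle>\<close>, \<open>|l-1,m\<rangle>\<close>, \<open>|l,m\<rangle>\<close> in \<open>\<pi>(b)|l,m\<rangle>\<close>; the sign \<open>\<plusminus>\<close> of the mid
  coefficients is left out.\<close>

definition a_up :: "real \<Rightarrow> real \<Rightarrow> real \<Rightarrow> real" where
  "a_up q l m = q powr (m - l - 1/2) * sqrt (qnum q (l+m+1) * qnum q (l+m+2)) / qnum q (2*l+2)"

definition a_down :: "real \<Rightarrow> real \<Rightarrow> real \<Rightarrow> real" where
  "a_down q l m = - (q powr (m + l + 1/2)) * sqrt (qnum q (l-m-1) * qnum q (l-m)) / qnum q (2*l)"

definition a_mid :: "real \<Rightarrow> real \<Rightarrow> real \<Rightarrow> real" where
  "a_mid q l m = (1 + q^2) * q powr (m - 1/2) / (qnum q (2*l) * qnum q (2*l+2))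
                   * sqrt (qnum q (l+m+1) * qnum q (l-m))"

definition b_up :: "real \<Rightarrow> real \<Rightarrow> real \<Rightarrow> real" where
  "b_up q l m = - (q powr (m + 1)) * sqrt (qnum q (l+m+1) * qnum q (l-m+1)) / qnum q (2*l+2)"

definition b_down :: "real \<Rightarrow> real \<Rightarrow> real \<Rightarrow> real" where
  "b_down q l m = - (q powr (m + 1)) * sqrt (qnum q (l+m) * qnum q (l-m)) / qnum q (2*l)"

definition b_mid :: "real \<Rightarrow> real \<Rightarrow> real \<Rightarrow> real" where
  "b_mid q l m = (qnum q (l-m+1) * qnum q (l+m) - q^2 * qnum q (l-m) * qnum q (l+m+1))
                   / (qnum q (2*l) * qnum q (2*l+2))"

lemma Ma_eq:
  "Ma q (s', n', k') (s, n, k) =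
    (let l = real n + 1/2; m = real_of_int k + 1/2 in
     if valid (s', n', k') \<and> valid (s, n, k) \<and> s' = s \<and> k' = k + 1 then
       if n' = n + 1 then a_up q l m
       else if n' + 1 = n then a_down q l m
       else if n' = n then (if s then 1 else -1) * a_mid q l m
       else 0
     else 0)"
  unfolding Ma_def a_up_def a_down_def a_mid_def Let_def prod.case
  by (simp only: times_divide_eq_right times_divide_eq_left mult.assoc)

lemma Mb_eq:
  "Mb q (s', n', k') (s, n, k) =
    (let l = real n + 1/2; m = real_of_int k + 1/2 in
     if valid (s', n', k') \<and> valid (s, n, k) \<and> s' = s \<and> k' = k then
       if n' = n + 1 then b_up q l m
       else if n' + 1 = n then b_down q l m
       else if n' = n then (if s then 1 else -1) * b_mid q l m
       else 0
     else 0)"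
  unfolding Mb_def b_up_def b_down_def b_mid_def Let_def prod.case times_divide_eq_right ..

context
  fixes q l m :: real
  assumes q: "0 < q" "q < 1" and lm: "1/2 \<le> l" "- l \<le> m" "m \<le> l"
begin

lemma a_down_bound: "\<bar>a_down q l m\<bar> \<le> 1 / (1 - q\<^sup>2) * q powr (l + m)"
proof -
  have "q powr (1 - 2 * l) \<le> qnum q (2 * l)"
    using q lm by (intro qnum_ge) auto
  moreover have "\<bar>- (q powr (m + l + 1/2)) * sqrt (qnum q (l-m-1) * qnum q (l-m))\<bar>
          \<le> 1 / (1 - q\<^sup>2) * q powr (m + l + 1/2 + 1 - (\<bar>l-m-1\<bar> + \<bar>l-m\<bar>) / 2)"
    unfolding mult_minus_left abs_minus_cancel by (rule abs_powr_sqrt_qnum_mult_le[OF q])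
  moreover have "l + m \<le> m + l + 1/2 + 1 - (\<bar>l-m-1\<bar> + \<bar>l-m\<bar>) / 2 - (1 - 2 * l)"
    using lm abs_triangle_ineq4[of "l - m" 1] by (simp add: abs_of_nonneg field_simps)
  ultimately show ?thesis
    unfolding a_down_def by (rule abs_divide_le_powr[OF q])
qed

lemma b_up_bound: "\<bar>b_up q l m\<bar> \<le> 1 / (1 - q\<^sup>2) * q powr (l + m)"
proof -
  have "q powr (1 - (2 * l + 2)) \<le> qnum q (2 * l + 2)"
    using q lm by (intro qnum_ge) auto
  moreover have "\<bar>- (q powr (m + 1)) * sqrt (qnum q (l+m+1) * qnum q (l-m+1))\<bar>
          \<le> 1 / (1 - q\<^sup>2) * q powr (m + 1 + 1 - (\<bar>l+m+1\<bar> + \<bar>l-m+1\<bar>) / 2)"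
    unfolding mult_minus_left abs_minus_cancel by (rule abs_powr_sqrt_qnum_mult_le[OF q])
  moreover have "l + m \<le> m + 1 + 1 - (\<bar>l+m+1\<bar> + \<bar>l-m+1\<bar>) / 2 - (1 - (2 * l + 2))"
    using lm by (simp add: abs_of_nonneg field_simps)
  ultimately show ?thesis
    unfolding b_up_def by (rule abs_divide_le_powr[OF q])
qed

lemma b_down_bound: "\<bar>b_down q l m\<bar> \<le> 1 / (1 - q\<^sup>2) * q powr (l + m)"
proof -
  have "q powr (1 - 2 * l) \<le> qnum q (2 * l)"
    using q lm by (intro qnum_ge) auto
  moreover have "\<bar>- (q powr (m + 1)) * sqrt (qnum q (l+m) * qnum q (l-m))\<bar>
          \<le> 1 / (1 - q\<^sup>2) * q powr (m + 1 + 1 - (\<bar>l+m\<bar> + \<bar>l-m\<bar>) / 2)"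
    unfolding mult_minus_left abs_minus_cancel by (rule abs_powr_sqrt_qnum_mult_le[OF q])
  moreover have "l + m \<le> m + 1 + 1 - (\<bar>l+m\<bar> + \<bar>l-m\<bar>) / 2 - (1 - 2 * l)"
    using lm by (simp add: abs_of_nonneg field_simps)
  ultimately show ?thesis
    unfolding b_down_def by (rule abs_divide_le_powr[OF q])
qed

lemma a_mid_bound: "\<bar>a_mid q l m\<bar> \<le> 2 / (1 - q\<^sup>2) * q powr (l + m)"
proof -
  have "\<bar>q powr (m - 1/2) * sqrt (qnum q (l+m+1) * qnum q (l-m))\<bar>
          \<le> 1 / (1 - q\<^sup>2) * q powr (m - 1/2 + 1 - (\<bar>l+m+1\<bar> + \<bar>l-m\<bar>) / 2)"
    by (rule abs_powr_sqrt_qnum_mult_le[OF q])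
  moreover have "\<bar>(1 + q\<^sup>2) * x\<bar> \<le> 2 * \<bar>x\<bar>" for x
    using q power_le_one[of q 2] by (simp add: abs_mult mult_right_mono)
  ultimately have "\<bar>(1 + q\<^sup>2) * (q powr (m - 1/2) * sqrt (qnum q (l+m+1) * qnum q (l-m)))\<bar>
          \<le> 2 / (1 - q\<^sup>2) * q powr (m - 1/2 + 1 - (\<bar>l+m+1\<bar> + \<bar>l-m\<bar>) / 2)"
    by (fastforce intro: order_trans)
  moreover have "l + m \<le> m - 1/2 + 1 - (\<bar>l+m+1\<bar> + \<bar>l-m\<bar>) / 2 - (- 4 * l)"
    using lm by (simp add: abs_of_nonneg field_simps)
  ultimately have "\<bar>(1 + q\<^sup>2) * (q powr (m - 1/2) * sqrt (qnum q (l+m+1) * qnum q (l-m)))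
                     / (qnum q (2 * l) * qnum q (2 * l + 2))\<bar> \<le> 2 / (1 - q\<^sup>2) * q powr (l + m)"
    by (rule abs_divide_le_powr[OF q qnum_mult_ge[OF q lm(1)]])
  then show ?thesis
    unfolding a_mid_def by (simp add: mult.assoc)
qed

lemma b_mid_bound: "\<bar>b_mid q l m\<bar> \<le> 2 / (1 - q\<^sup>2)\<^sup>2 * q powr (l + m)"
proof -
  have sum: "\<bar>l-m+1\<bar> + \<bar>l+m\<bar> = 2 * l + 1" "\<bar>l-m\<bar> + \<bar>l+m+1\<bar> = 2 * l + 1"
    using lm by auto
  have "\<bar>qnum q (l-m+1) * qnum q (l+m)\<bar> \<le> q powr (1 - 2 * l) / (1 - q\<^sup>2)\<^sup>2"
    using abs_qnum_mult_le[OF q, of "l-m+1" "l+m"] sum by (simp add: diff_diff_eq)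
  moreover have "\<bar>q\<^sup>2 * qnum q (l-m) * qnum q (l+m+1)\<bar> \<le> q powr (1 - 2 * l) / (1 - q\<^sup>2)\<^sup>2"
  proof -
    have "\<bar>q\<^sup>2 * qnum q (l-m) * qnum q (l+m+1)\<bar> \<le> \<bar>qnum q (l-m) * qnum q (l+m+1)\<bar>"
      using q power_le_one[of q 2] by (simp add: abs_mult mult.assoc mult_left_le_one_le)
    also have "\<dots> \<le> q powr (1 - 2 * l) / (1 - q\<^sup>2)\<^sup>2"
      using abs_qnum_mult_le[OF q, of "l-m" "l+m+1"] sum by (simp add: diff_diff_eq)
    finally show ?thesis .
  qed
  ultimately have "\<bar>qnum q (l-m+1) * qnum q (l+m) - q\<^sup>2 * qnum q (l-m) * qnum q (l+m+1)\<bar>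
                     \<le> 2 / (1 - q\<^sup>2)\<^sup>2 * q powr (1 - 2 * l)"
    using abs_triangle_ineq4[of "qnum q (l-m+1) * qnum q (l+m)" "q\<^sup>2 * qnum q (l-m) * qnum q (l+m+1)"]
    by simp
  moreover have "l + m \<le> 1 - 2 * l - (- 4 * l)"
    using lm by simp
  ultimately show ?thesis
    unfolding b_mid_def by (rule abs_divide_le_powr[OF q qnum_mult_ge[OF q lm(1)]])
qed

lemma a_up_eq:
  "a_up q l m = sqrt ((1 - q powr (2 * (l + m + 1))) * (1 - q powr (2 * (l + m + 2))))
                  / (1 - q powr (2 * (2 * l + 2)))"
proof -
  define X Y Z where "X = 1 - q powr (2 * (l + m + 1))" and "Y = 1 - q powr (2 * (l + m + 2))"
    and "Z = 1 - q powr (2 * (2 * l + 2))"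
  have qsq: "0 < 1 - q\<^sup>2"
    using one_minus_square_pos[OF q] .
  have "X \<ge> 0" "Y \<ge> 0"
    using q lm unfolding X_def Y_def by (auto intro!: powr_le1)
  have "(q powr (- (l + m + 1/2)))\<^sup>2 = q powr (1 - (l + m + 1)) * q powr (1 - (l + m + 2))"
    by (simp add: power2_eq_square powr_add[symmetric])
  then have "qnum q (l+m+1) * qnum q (l+m+2) = (q powr (- (l + m + 1/2)) / (1 - q\<^sup>2))\<^sup>2 * (X * Y)"
    using q unfolding X_def Y_def by (simp add: qnum_eq power_divide power2_eq_square)
  then have "sqrt (qnum q (l+m+1) * qnum q (l+m+2)) = q powr (- (l + m + 1/2)) / (1 - q\<^sup>2) * sqrt (X * Y)"
    using qsq by (simp add: real_sqrt_mult)
  moreover have "qnum q (2*l+2) = q powr (1 - (2 * l + 2)) * Z / (1 - q\<^sup>2)"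
    unfolding Z_def by (rule qnum_eq[OF q])
  moreover have "q powr (m - l - 1/2) * q powr (- (l + m + 1/2)) = q powr (1 - (2 * l + 2))"
    unfolding powr_add[symmetric] by (rule arg_cong[where f = "(powr) q"]) simp
  moreover have cancel: "a * (b / c * s) / (a * b * z / c) = s / z" if "a * b \<noteq> 0" "c \<noteq> 0"
    for a b c s z :: real
    using that by (simp add: field_simps)
  ultimately show ?thesis
    using q qsq unfolding a_up_def X_def[symmetric] Y_def[symmetric] Z_def[symmetric]
    by (metis powr_gt_zero less_irrefl)
qed

lemma a_up_approx: "\<bar>a_up q l m - 1\<bar> \<le> 3 / (1 - q\<^sup>2) * q powr (l + m)"
proof -
  define X Y Z where "X = 1 - q powr (2 * (l + m + 1))" and "Y = 1 - q powr (2 * (l + m + 2))"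
    and "Z = 1 - q powr (2 * (2 * l + 2))"
  have small: "q powr e \<le> q powr (l + m)" "q powr e \<le> 1" if "l + m \<le> e" for e
    using q lm that by (auto intro!: powr_mono' powr_le1)
  have XYZ: "0 \<le> X" "X \<le> 1" "0 \<le> Y" "Y \<le> 1" "Z \<le> 1"
    "1 - X \<le> q powr (l + m)" "1 - Y \<le> q powr (l + m)" "1 - Z \<le> q powr (l + m)"
    using small lm unfolding X_def Y_def Z_def by auto
  have "q powr (2 * (2 * l + 2)) \<le> q powr 2"
    using q lm by (intro powr_mono') auto
  then have Z_ge: "1 - q\<^sup>2 \<le> Z"
    using q unfolding Z_def by (simp add: powr_numeral)
  moreover have "0 < 1 - q\<^sup>2"
    using one_minus_square_pos[OF q] .
  ultimately have "0 < Z"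
    by linarith
  then have "\<bar>a_up q l m - 1\<bar> = \<bar>(sqrt (X * Y) - Z) / Z\<bar>"
    unfolding a_up_eq X_def[symmetric] Y_def[symmetric] Z_def[symmetric]
    by (simp add: diff_divide_distrib)
  also have "\<dots> = \<bar>sqrt (X * Y) - Z\<bar> / Z"
    using \<open>0 < Z\<close> by (simp add: abs_div)
  also have "\<dots> \<le> 3 * q powr (l + m) / (1 - q\<^sup>2)"
    using abs_sqrt_mult_minus_le[of X Y Z] XYZ Z_ge \<open>0 < 1 - q\<^sup>2\<close> by (intro frac_le) auto
  finally show ?thesis by simp
qed

lemma coefficient_bounds:
  "\<bar>a_up q l m - 1\<bar> \<le> 3 / (1 - q\<^sup>2)\<^sup>2 * q powr (l + m)"
  "\<bar>a_down q l m\<bar> \<le> 3 / (1 - q\<^sup>2)\<^sup>2 * q powr (l + m)"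
  "\<bar>a_mid q l m\<bar> \<le> 3 / (1 - q\<^sup>2)\<^sup>2 * q powr (l + m)"
  "\<bar>b_up q l m\<bar> \<le> 3 / (1 - q\<^sup>2)\<^sup>2 * q powr (l + m)"
  "\<bar>b_down q l m\<bar> \<le> 3 / (1 - q\<^sup>2)\<^sup>2 * q powr (l + m)"
  "\<bar>b_mid q l m\<bar> \<le> 3 / (1 - q\<^sup>2)\<^sup>2 * q powr (l + m)"
proof -
  have weaken: "\<bar>x\<bar> \<le> 3 / (1 - q\<^sup>2)\<^sup>2 * q powr (l + m)"
    if "\<bar>x\<bar> \<le> c / (1 - q\<^sup>2) * q powr (l + m)" "0 \<le> c" "c \<le> 3" for x c
    using that(1) mult_right_mono[OF one_minus_square_div_le[OF q that(2,3)], of "q powr (l + m)"]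
    by simp
  show "\<bar>a_up q l m - 1\<bar> \<le> 3 / (1 - q\<^sup>2)\<^sup>2 * q powr (l + m)"
    by (rule weaken[OF a_up_approx]) simp_all
  show "\<bar>a_down q l m\<bar> \<le> 3 / (1 - q\<^sup>2)\<^sup>2 * q powr (l + m)"
    by (rule weaken[OF a_down_bound]) simp_all
  show "\<bar>a_mid q l m\<bar> \<le> 3 / (1 - q\<^sup>2)\<^sup>2 * q powr (l + m)"
    by (rule weaken[OF a_mid_bound]) simp_all
  show "\<bar>b_up q l m\<bar> \<le> 3 / (1 - q\<^sup>2)\<^sup>2 * q powr (l + m)"
    by (rule weaken[OF b_up_bound]) simp_all
  show "\<bar>b_down q l m\<bar> \<le> 3 / (1 - q\<^sup>2)\<^sup>2 * q powr (l + m)"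
    by (rule weaken[OF b_down_bound]) simp_all
  have "2 / (1 - q\<^sup>2)\<^sup>2 \<le> 3 / (1 - q\<^sup>2)\<^sup>2"
    by (simp add: divide_right_mono)
  then show "\<bar>b_mid q l m\<bar> \<le> 3 / (1 - q\<^sup>2)\<^sup>2 * q powr (l + m)"
    using b_mid_bound by (meson mult_right_mono order_trans powr_ge_zero)
qed

end

section \<open>Comparison with the limit shifts\<close>

text \<open>\<open>l + m\<close> for the basis vector \<open>|l,m\<rangle>\<close>; the deviation of \<open>\<pi>\<close> from its limit at
  \<open>|l,m\<rangle>\<close> is \<open>O(q\<^bsup>l+m\<^esup>)\<close>.\<close>

definition l_plus_m :: "idx \<Rightarrow> real" where
  "l_plus_m j = (case j of (s, n, k) \<Rightarrow> real n + real_of_int k + 1)"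

lemma valid_lm:
  assumes "valid (s, n, k)"
  shows "1/2 \<le> real n + 1/2" "- (real n + 1/2) \<le> real_of_int k + 1/2" "real_of_int k + 1/2 \<le> real n + 1/2"
proof -
  have "real_of_int (- int n - 1) \<le> real_of_int k" "real_of_int k \<le> real_of_int (int n)"
    using assms unfolding valid_def of_int_le_iff by auto
  then show "1/2 \<le> real n + 1/2" "- (real n + 1/2) \<le> real_of_int k + 1/2"
    "real_of_int k + 1/2 \<le> real n + 1/2"
    by auto
qed

lemma l_plus_m_nonneg: "valid j \<Longrightarrow> 0 \<le> l_plus_m j"
  unfolding valid_def l_plus_m_def by (cases j) auto

definition shift :: "gen \<Rightarrow> idx \<Rightarrow> idx option" where
  "shift g j = (case j of (s, n, k) \<Rightarrow> (case g of
      GA \<Rightarrow> if valid j then Some (s, n + 1, k + 1) else None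
    | GAs \<Rightarrow> if valid j \<and> 0 < n \<and> valid (s, n - 1, k - 1) then Some (s, n - 1, k - 1) else None
    | GB \<Rightarrow> None))"

lemma shift_GAs_iff: "shift GAs j = Some i \<longleftrightarrow> shift GA i = Some j"
  by (cases i; cases j; cases "fst (snd j)") (auto simp: shift_def valid_def)

lemma l_plus_m_shift: "shift g j = Some i \<Longrightarrow> l_plus_m j - 2 \<le> l_plus_m i"
  by (cases j; cases g) (auto simp: shift_def l_plus_m_def split: if_split_asm)

lemma l_plus_m_shift_GA: "shift GA i = Some j \<Longrightarrow> l_plus_m j = l_plus_m i + 2"
  by (cases i) (auto simp: shift_def l_plus_m_def split: if_split_asm)

lemma Ma_approx:
  assumes q: "0 < q" "q < 1"
  shows "\<bar>Ma q i j - (if shift GA j = Some i then 1 else 0)\<bar> \<le> 3 / (1 - q\<^sup>2)\<^sup>2 * q powr l_plus_m j"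
proof -
  obtain s' n' k' s n k where ij: "i = (s', n', k')" "j = (s, n, k)"
    by (cases i, cases j) auto
  define l m where "l = real n + 1/2" and "m = real_of_int k + 1/2"
  show ?thesis
  proof (cases "valid i \<and> valid j \<and> s' = s \<and> k' = k + 1")
    case False
    then have "Ma q i j = 0" "shift GA j \<noteq> Some i"
      unfolding ij by (auto simp: Ma_eq Let_def shift_def valid_def)
    then show ?thesis by simp
  next
    case True
    then have lm: "1/2 \<le> l" "- l \<le> m" "m \<le> l"
      using valid_lm unfolding ij l_def m_def by blast+
    have "l_plus_m j = l + m"
      unfolding ij l_plus_m_def l_def m_def by simp
    moreover have "shift GA j = Some i \<longleftrightarrow> n' = n + 1"
      using True unfolding ij by (auto simp: shift_def)
    moreover have "Ma q i j = (if n' = n + 1 then a_up q l m else if n' + 1 = n then a_down q l m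
                               else if n' = n then (if s then 1 else -1) * a_mid q l m else 0)"
      unfolding ij Ma_eq Let_def l_def[symmetric] m_def[symmetric] if_P[OF True[unfolded ij]] ..
    ultimately show ?thesis
      using coefficient_bounds[OF q lm] by (simp add: abs_mult)
  qed
qed

lemma Mb_bound:
  assumes q: "0 < q" "q < 1"
  shows "\<bar>Mb q i j\<bar> \<le> 3 / (1 - q\<^sup>2)\<^sup>2 * q powr l_plus_m j"
proof -
  obtain s' n' k' s n k where ij: "i = (s', n', k')" "j = (s, n, k)"
    by (cases i, cases j) auto
  define l m where "l = real n + 1/2" and "m = real_of_int k + 1/2"
  show ?thesis
  proof (cases "valid i \<and> valid j \<and> s' = s \<and> k' = k")
    case False
    then have "Mb q i j = 0"
      unfolding ij by (auto simp: Mb_eq Let_def)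
    then show ?thesis by simp
  next
    case True
    then have lm: "1/2 \<le> l" "- l \<le> m" "m \<le> l"
      using valid_lm unfolding ij l_def m_def by blast+
    have "l_plus_m j = l + m"
      unfolding ij l_plus_m_def l_def m_def by simp
    moreover have "Mb q i j = (if n' = n + 1 then b_up q l m else if n' + 1 = n then b_down q l m
                               else if n' = n then (if s then 1 else -1) * b_mid q l m else 0)"
      unfolding ij Mb_eq Let_def l_def[symmetric] m_def[symmetric] if_P[OF True[unfolded ij]] ..
    ultimately show ?thesis
      using coefficient_bounds[OF q lm] by (simp add: abs_mult)
  qed
qed

lemma Ma_nonzero:
  "Ma q (s', n', k') (s, n, k) \<noteq> 0 \<Longrightarrow>
     valid (s', n', k') \<and> valid (s, n, k) \<and> s' = s \<and> k' = k + 1 \<and> n' \<le> n + 1 \<and> n \<le> n' + 1"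
  by (auto simp: Ma_eq Let_def split: if_splits)

lemma Mb_nonzero:
  "Mb q (s', n', k') (s, n, k) \<noteq> 0 \<Longrightarrow>
     valid (s', n', k') \<and> valid (s, n, k) \<and> s' = s \<and> k' = k \<and> n' \<le> n + 1 \<and> n \<le> n' + 1"
  by (auto simp: Mb_eq Let_def split: if_splits)

text \<open>The factor \<open>q\<^sup>-\<^sup>2\<close> pays for \<open>\<pi>(a\<^sup>*)\<close>, whose entries are entries of \<open>\<pi>(a)\<close> at an
  index with \<open>l + m\<close> smaller by at most \<open>2\<close>.\<close>

definition coef_bound :: "real \<Rightarrow> real" where
  "coef_bound q = 3 / (q * (1 - q\<^sup>2))\<^sup>2"

lemma coef_bound_nonneg: "0 \<le> coef_bound q"
  unfolding coef_bound_def by simp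

lemma Mgen_nonzero: "Mgen q g i j \<noteq> 0 \<Longrightarrow> valid j \<and> j \<in> nbr i"
  by (cases i; cases j; cases g) (auto simp: Mgen_def nbr_def dest!: Ma_nonzero Mb_nonzero)

lemma Mgen_approx:
  assumes q: "0 < q" "q < 1"
  shows "\<bar>Mgen q g i j - (if shift g j = Some i then 1 else 0)\<bar> \<le> coef_bound q * q powr l_plus_m j"
proof -
  have q2: "0 < q\<^sup>2" "q\<^sup>2 \<le> 1"
    using q by (auto simp: power_le_one)
  have K: "3 / (1 - q\<^sup>2)\<^sup>2 = coef_bound q * q\<^sup>2"
    using q unfolding coef_bound_def by (simp add: power_mult_distrib)
  have "3 / (1 - q\<^sup>2)\<^sup>2 * q powr l_plus_m j \<le> coef_bound q * q powr l_plus_m j"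
    using q2 coef_bound_nonneg[of q] unfolding K by (simp add: mult_left_le mult_right_mono)
  moreover have "3 / (1 - q\<^sup>2)\<^sup>2 * q powr l_plus_m i \<le> coef_bound q * q powr l_plus_m j"
    if "l_plus_m j \<le> l_plus_m i + 2"
  proof -
    have "q powr l_plus_m i \<le> q powr (l_plus_m j - 2)"
      using q that by (intro powr_mono') auto
    also have "\<dots> = q powr l_plus_m j / q\<^sup>2"
      using q by (simp add: powr_diff powr_numeral)
    finally have "q\<^sup>2 * q powr l_plus_m i \<le> q powr l_plus_m j"
      using q2 by (simp add: field_simps)
    then show ?thesis
      unfolding K mult.assoc using coef_bound_nonneg[of q] by (rule mult_left_mono)
  qed
  moreover have "l_plus_m j \<le> l_plus_m i + 2" if "Ma q j i \<noteq> 0 \<or> shift GA i = Some j"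
    using that l_plus_m_shift_GA[of i j]
    by (cases i; cases j) (auto simp: l_plus_m_def dest!: Ma_nonzero)
  ultimately show ?thesis
    using Ma_approx[OF q, of i j] Ma_approx[OF q, of j i] Mb_bound[OF q, of i j]
    by (cases g) (fastforce simp: Mgen_def shift_GAs_iff shift_def[of GB] split: prod.splits)+
qed

lemma abs_Mgen_le:
  assumes q: "0 < q" "q < 1"
  shows "\<bar>Mgen q g i j\<bar> \<le> 1 + coef_bound q"
proof (cases "Mgen q g i j = 0")
  case False
  then have "q powr l_plus_m j \<le> 1"
    using q Mgen_nonzero l_plus_m_nonneg by (intro powr_le1) auto
  then have "coef_bound q * q powr l_plus_m j \<le> coef_bound q"
    using coef_bound_nonneg[of q] by (simp add: mult_left_le)
  then show ?thesis
    using Mgen_approx[OF q, of g i j] by (auto split: if_splits)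
qed (simp add: coef_bound_nonneg)

lemma nbr_subset: "nbr (s, n, k) \<subseteq> (\<lambda>(n', k'). (s, n', k')) ` ({n - 1..n + 1} \<times> {k - 1..k + 1})"
  unfolding nbr_def by (auto simp: image_iff)

lemma finite_nbr: "finite (nbr i)"
  by (cases i) (auto intro: finite_subset[OF nbr_subset])

lemma card_nbr_le: "card (nbr i) \<le> 9"
proof -
  obtain s n k where i: "i = (s, n, k)"
    by (cases i) auto
  have "card (nbr i) \<le> card ((\<lambda>(n', k'). (s, n', k')) ` ({n - 1..n + 1} \<times> {k - 1..k + 1}))"
    unfolding i by (intro card_mono nbr_subset) auto
  also have "\<dots> \<le> card {n - 1..n + 1} * card {k - 1..k + 1}"
    by (metis card_cartesian_product card_image_le finite_SigmaI finite_atLeastAtMost finite_atLeastAtMost_int)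
  also have "\<dots> \<le> 3 * 3"
    by (intro mult_mono) auto
  finally show ?thesis by simp
qed

lemma apply_gen_basis: "apply_gen q g (basis j) i = complex_of_real (Mgen q g i j)"
proof -
  have "apply_gen q g (basis j) i = (\<Sum>j'\<in>nbr i. if j' = j then complex_of_real (Mgen q g i j) else 0)"
    unfolding apply_gen_def basis_def by (intro sum.cong) auto
  also have "\<dots> = complex_of_real (Mgen q g i j)"
    using finite_nbr Mgen_nonzero[of q g i j] by auto
  finally show ?thesis .
qed

lemma apply_gen_diff: "apply_gen q g u i - apply_gen q g v i = apply_gen q g (\<lambda>j. u j - v j) i"
  unfolding apply_gen_def by (simp add: right_diff_distrib sum_subtractf)

lemma norm_apply_gen_le:
  assumes q: "0 < q" "q < 1" and v: "\<And>j. norm (v j) \<le> E"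
  shows "norm (apply_gen q g v i) \<le> 9 * (1 + coef_bound q) * E"
proof -
  have "norm (apply_gen q g v i) \<le> (\<Sum>j\<in>nbr i. \<bar>Mgen q g i j\<bar> * norm (v j))"
    unfolding apply_gen_def by (rule norm_sum[THEN order_trans]) (simp add: norm_mult)
  also have "\<dots> \<le> (\<Sum>j\<in>nbr i. (1 + coef_bound q) * E)"
    using abs_Mgen_le[OF q] v coef_bound_nonneg[of q] by (intro sum_mono mult_mono) auto
  also have "\<dots> \<le> 9 * ((1 + coef_bound q) * E)"
    using card_nbr_le[of i] coef_bound_nonneg[of q] order_trans[OF norm_ge_zero v]
    by (simp, intro mult_right_mono) auto
  finally show ?thesis by (simp only: mult.assoc)
qed

section \<open>Diagonal entries of \<open>\<pi>(x)\<close>\<close>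

fun shift_word :: "gen list \<Rightarrow> idx \<Rightarrow> idx option" where
  "shift_word [] j = Some j"
| "shift_word (g # w) j = Option.bind (shift_word w j) (shift g)"

definition shift_vec :: "gen list \<Rightarrow> idx \<Rightarrow> idx \<Rightarrow> complex" where
  "shift_vec w j = (case shift_word w j of None \<Rightarrow> (\<lambda>_. 0) | Some i \<Rightarrow> basis i)"

lemma l_plus_m_shift_word:
  "shift_word w j = Some i \<Longrightarrow> l_plus_m j - 2 * real (length w) \<le> l_plus_m i"
proof (induction w arbitrary: i)
  case (Cons g w)
  then obtain i' where "shift_word w j = Some i'" "shift g i' = Some i"
    by (cases "shift_word w j") auto
  then show ?case
    using Cons.IH l_plus_m_shift[of g i' i] by fastforce
qed simp

lemma apply_gen_shift_vec_approx:
  assumes q: "0 < q" "q < 1"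
  shows "norm (apply_gen q g (shift_vec w j) i - shift_vec (g # w) j i)
           \<le> coef_bound q * q powr (- 2 * real (length w)) * q powr l_plus_m j"
proof (cases "shift_word w j")
  case None
  then show ?thesis
    using coef_bound_nonneg[of q] by (simp add: shift_vec_def apply_gen_def)
next
  case (Some j')
  have "shift_vec w j = basis j'"
    "shift_vec (g # w) j i = complex_of_real (if shift g j' = Some i then 1 else 0)"
    using Some by (auto simp: shift_vec_def basis_def split: option.split)
  then have "norm (apply_gen q g (shift_vec w j) i - shift_vec (g # w) j i)
          = \<bar>Mgen q g i j' - (if shift g j' = Some i then 1 else 0)\<bar>"
    by (simp only: apply_gen_basis of_real_diff[symmetric] norm_of_real)
  also have "\<dots> \<le> coef_bound q * q powr l_plus_m j'"
    by (rule Mgen_approx[OF q])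
  also have "\<dots> \<le> coef_bound q * q powr (- 2 * real (length w) + l_plus_m j)"
    using q l_plus_m_shift_word[OF Some] coef_bound_nonneg[of q]
    by (intro mult_left_mono powr_mono') auto
  also have "\<dots> = coef_bound q * q powr (- 2 * real (length w)) * q powr l_plus_m j"
    by (simp only: powr_add mult.assoc)
  finally show ?thesis .
qed

lemma apply_word_basis_approx:
  assumes q: "0 < q" "q < 1"
  shows "\<exists>C\<ge>0. \<forall>j i. norm (apply_word q w (basis j) i - shift_vec w j i) \<le> C * q powr l_plus_m j"
proof (induction w)
  case Nil
  show ?case
    by (intro exI[of _ 0]) (simp add: apply_word_def shift_vec_def)
next
  case (Cons g w)
  then obtain C where C: "0 \<le> C"
    "\<And>j i. norm (apply_word q w (basis j) i - shift_vec w j i) \<le> C * q powr l_plus_m j"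
    by blast
  define C' where "C' = 9 * (1 + coef_bound q) * C + coef_bound q * q powr (- 2 * real (length w))"
  have "norm (apply_word q (g # w) (basis j) i - shift_vec (g # w) j i) \<le> C' * q powr l_plus_m j" for j i
  proof -
    have "apply_word q (g # w) (basis j) i - shift_vec (g # w) j i
            = apply_gen q g (\<lambda>i'. apply_word q w (basis j) i' - shift_vec w j i') i
              + (apply_gen q g (shift_vec w j) i - shift_vec (g # w) j i)"
      by (simp add: apply_word_def apply_gen_diff[symmetric])
    also have "norm \<dots> \<le> 9 * (1 + coef_bound q) * (C * q powr l_plus_m j)
                          + coef_bound q * q powr (- 2 * real (length w)) * q powr l_plus_m j"
      using norm_apply_gen_le[OF q C(2)] apply_gen_shift_vec_approx[OF q]
      by (intro norm_triangle_le add_mono)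
    finally show ?thesis
      by (simp add: C'_def algebra_simps)
  qed
  moreover have "0 \<le> C'"
    using C(1) coef_bound_nonneg[of q] unfolding C'_def by simp
  ultimately show ?case
    by blast
qed

fun gen_degree :: "gen \<Rightarrow> int" where
  "gen_degree GA = 1"
| "gen_degree GAs = -1"
| "gen_degree GB = 0"

definition word_degree :: "gen list \<Rightarrow> int" where
  "word_degree w = (\<Sum>g\<leftarrow>w. gen_degree g)"

definition word_mean :: "gen list \<Rightarrow> complex" where
  "word_mean w = (if GB \<notin> set w \<and> word_degree w = 0 then 1 else 0)"

definition rho_mean :: "ncpoly \<Rightarrow> complex" where
  "rho_mean x = (\<Sum>(c, w)\<leftarrow>x. c * word_mean w)"

lemma word_degree_Cons [simp]: "word_degree (g # w) = gen_degree g + word_degree w"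
  by (simp add: word_degree_def)

lemma abs_word_degree_le: "\<bar>word_degree w\<bar> \<le> int (length w)"
proof (induction w)
  case (Cons g w)
  then show ?case
    by (cases g) auto
qed (simp add: word_degree_def)

lemma shift_word_SomeD:
  "shift_word w j = Some i \<Longrightarrow> GB \<notin> set w \<and> snd (snd i) = snd (snd j) + word_degree w"
proof (induction w arbitrary: i)
  case (Cons g w)
  then obtain i' where "shift_word w j = Some i'" "shift g i' = Some i"
    by (cases "shift_word w j") auto
  then show ?case
    using Cons.IH by (cases i'; cases g) (auto simp: shift_def split: if_split_asm)
qed (simp add: word_degree_def)

lemma shift_word_far:
  assumes "valid (s, n, k)" "GB \<notin> set w" "2 * real (length w) \<le> l_plus_m (s, n, k)"
  shows "\<exists>n'. shift_word w (s, n, k) = Some (s, n', k + word_degree w)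
              \<and> int n' = int n + word_degree w \<and> valid (s, n', k + word_degree w)"
  using assms(2,3)
proof (induction w)
  case Nil
  then show ?case
    using assms(1) by (simp add: word_degree_def)
next
  case (Cons g w)
  then obtain n' where n': "shift_word w (s, n, k) = Some (s, n', k + word_degree w)"
    "int n' = int n + word_degree w" "valid (s, n', k + word_degree w)"
    by auto
  have "2 * int (length w) + 2 \<le> int n + k + 1"
    using Cons.prems(2) unfolding l_plus_m_def by simp
  then have far: "1 \<le> int n' + (k + word_degree w)"
    using n'(2) abs_word_degree_le[of w] by linarith
  show ?case
  proof (cases g)
    case GA
    then show ?thesis
      using n' by (auto simp: shift_def valid_def algebra_simps)
  next
    case GAs
    then show ?thesis
      using n' far by (auto simp: shift_def valid_def algebra_simps of_nat_diff)
  next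
    case GB
    then show ?thesis
      using Cons.prems(1) by simp
  qed
qed

lemma shift_vec_diag:
  assumes "valid j" "2 * real (length w) \<le> l_plus_m j"
  shows "shift_vec w j j = word_mean w"
proof (cases "shift_word w j = Some j")
  case True
  then show ?thesis
    using shift_word_SomeD[OF True] by (simp add: shift_vec_def word_mean_def basis_def)
next
  case False
  obtain s n k where j: "j = (s, n, k)"
    by (cases j) auto
  have "word_mean w = 0"
    using shift_word_far[of s n k w] assms False unfolding j word_mean_def by auto
  moreover have "shift_vec w j j = 0"
    using False by (auto simp: shift_vec_def basis_def split: option.split)
  ultimately show ?thesis by simp
qed

lemma le_powr_of_tail_bound:
  fixes q :: real
  assumes q: "0 < q" "q < 1" and "0 \<le> L" "0 \<le> C" "C \<le> B" "e \<le> B"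
    and tail: "L \<le> p \<Longrightarrow> e \<le> C * q powr p"
  shows "e \<le> B * q powr (- L) * q powr p"
proof (cases "L \<le> p")
  case True
  have "q powr 0 \<le> q powr (- L)"
    using assms by (intro powr_mono') auto
  then have "C * q powr p \<le> B * q powr (- L) * q powr p"
    using assms mult_mono[of C B 1 "q powr (- L)"] by (intro mult_right_mono) auto
  then show ?thesis
    using tail[OF True] by linarith
next
  case False
  have "e \<le> B * q powr (- L) * q powr L"
    using assms by (simp add: powr_minus field_simps)
  also have "\<dots> \<le> B * q powr (- L) * q powr p"
    using assms False by (intro mult_left_mono powr_mono') auto
  finally show ?thesis .
qed

lemma apply_word_diag_approx:
  assumes q: "0 < q" "q < 1"
  shows "\<exists>C\<ge>0. \<forall>j. valid j \<longrightarrow> norm (apply_word q w (basis j) j - word_mean w) \<le> C * q powr l_plus_m j"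
proof -
  obtain C where C: "0 \<le> C"
    "\<And>j i. norm (apply_word q w (basis j) i - shift_vec w j i) \<le> C * q powr l_plus_m j"
    using apply_word_basis_approx[OF q] by blast
  define L where "L = 2 * real (length w)"
  have "norm (apply_word q w (basis j) j - word_mean w) \<le> (C + 2) * q powr (- L) * q powr l_plus_m j"
    if "valid j" for j
  proof (rule le_powr_of_tail_bound[OF q, of L C "C + 2"])
    have "norm (shift_vec w j j) \<le> 1" "norm (word_mean w) \<le> 1"
      by (auto simp: shift_vec_def basis_def word_mean_def split: option.split)
    moreover have "C * q powr l_plus_m j \<le> C"
      using q C(1) l_plus_m_nonneg[OF that] by (simp add: mult_left_le powr_le1)
    moreover have "norm (apply_word q w (basis j) j - word_mean w)
        \<le> norm (apply_word q w (basis j) j - shift_vec w j j) + (norm (shift_vec w j j) + norm (word_mean w))"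
      using norm_triangle_ineq[of "apply_word q w (basis j) j - shift_vec w j j" "shift_vec w j j - word_mean w"]
        norm_triangle_ineq4[of "shift_vec w j j" "word_mean w"] by simp
    ultimately show "norm (apply_word q w (basis j) j - word_mean w) \<le> C + 2"
      using C(2)[of j j] by linarith
    show "norm (apply_word q w (basis j) j - word_mean w) \<le> C * q powr l_plus_m j"
      if "L \<le> l_plus_m j"
      using C(2)[of j j] shift_vec_diag[OF \<open>valid j\<close>] that unfolding L_def by simp
  qed (use C(1) in \<open>auto simp: L_def\<close>)
  moreover have "0 \<le> (C + 2) * q powr (- L)"
    using C(1) by simp
  ultimately show ?thesis
    by blast
qed

lemma pi_entry_diag_approx:
  assumes q: "0 < q" "q < 1"
  shows "\<exists>C\<ge>0. \<forall>j. valid j \<longrightarrow> norm (pi_entry q x j j - rho_mean x) \<le> C * q powr l_plus_m j"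
proof (induction x)
  case Nil
  show ?case
    by (intro exI[of _ 0]) (simp add: pi_entry_def rho_mean_def)
next
  case (Cons cw x)
  obtain c w where cw: "cw = (c, w)"
    by (cases cw) auto
  obtain C1 where C1: "0 \<le> C1"
    "\<And>j. valid j \<Longrightarrow> norm (apply_word q w (basis j) j - word_mean w) \<le> C1 * q powr l_plus_m j"
    using apply_word_diag_approx[OF q] by blast
  obtain C2 where C2: "0 \<le> C2"
    "\<And>j. valid j \<Longrightarrow> norm (pi_entry q x j j - rho_mean x) \<le> C2 * q powr l_plus_m j"
    using Cons.IH by blast
  have "norm (pi_entry q (cw # x) j j - rho_mean (cw # x)) \<le> (norm c * C1 + C2) * q powr l_plus_m j"
    if "valid j" for j
  proof -
    have "pi_entry q (cw # x) j j - rho_mean (cw # x)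
            = c * (apply_word q w (basis j) j - word_mean w) + (pi_entry q x j j - rho_mean x)"
      unfolding cw by (simp add: pi_entry_def rho_mean_def algebra_simps)
    also have "norm \<dots> \<le> norm c * (C1 * q powr l_plus_m j) + C2 * q powr l_plus_m j"
      using C1(2)[OF that] C2(2)[OF that]
      by (intro norm_triangle_le add_mono) (auto simp: norm_mult intro: mult_left_mono)
    finally show ?thesis
      by (simp add: algebra_simps)
  qed
  moreover have "0 \<le> norm c * C1 + C2"
    using C1(1) C2(1) by simp
  ultimately show ?case
    by blast
qed

lemma pi_entry_diag_bounded:
  assumes q: "0 < q" "q < 1"
  shows "\<exists>B. \<forall>j. valid j \<longrightarrow> norm (pi_entry q x j j) \<le> B"
proof -
  obtain C where C: "0 \<le> C" "\<And>j. valid j \<Longrightarrow> norm (pi_entry q x j j - rho_mean x) \<le> C * q powr l_plus_m j"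
    using pi_entry_diag_approx[OF q] by blast
  have "norm (pi_entry q x j j) \<le> norm (rho_mean x) + C" if "valid j" for j
  proof -
    have "q powr l_plus_m j \<le> 1"
      using q l_plus_m_nonneg[OF that] by (intro powr_le1) auto
    then have "norm (pi_entry q x j j - rho_mean x) \<le> C"
      using C(1) C(2)[OF that] by (meson mult_left_le order_trans)
    then show ?thesis
      by (metis add.commute norm_triangle_sub order_trans add_left_mono)
  qed
  then show ?thesis
    by blast
qed

section \<open>The integral of \<open>\<rho>(x)\<close>\<close>

lemma has_integral_exp_int:
  fixes d :: int
  shows "((\<lambda>\<theta>. exp (\<i> * of_int d * of_real \<theta>)) has_integral (if d = 0 then 2 * pi else 0)) {0..2 * pi}"
proof (cases "d = 0")
  case True
  then show ?thesis
    using has_integral_const_real[of "1::complex" 0 "2 * pi"] by (simp add: scaleR_conv_of_real)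
next
  case False
  define F where "F z = exp (\<i> * of_int d * z) / (\<i> * of_int d)" for z :: complex
  have F': "(F has_field_derivative exp (\<i> * of_int d * z)) (at z)" for z
    unfolding F_def using False by (auto intro!: derivative_eq_intros)
  have "((\<lambda>\<theta>. exp (\<i> * of_int d * of_real \<theta>)) has_integral F (of_real (2 * pi)) - F (of_real 0)) {0..2 * pi}"
    by (rule fundamental_theorem_of_calculus) (auto intro: has_vector_derivative_real_field[OF F'])
  moreover have "F (of_real (2 * pi)) = F (of_real 0)"
    using exp_integer_2pi[of "real_of_int d"] unfolding F_def by (simp add: mult.commute mult.left_commute)
  ultimately show ?thesis
    using False by simp
qed

lemma rho_word:
  "(\<Prod>g\<leftarrow>w. rho_gen g \<theta>) = (if GB \<in> set w then 0 else exp (\<i> * of_int (word_degree w) * of_real \<theta>))"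
proof (induction w)
  case (Cons g w)
  then show ?case
    by (cases g) (auto simp: rho_gen_def algebra_simps simp flip: exp_add)
qed (simp add: word_degree_def)

lemma rho_has_integral: "(rho x has_integral 2 * pi * rho_mean x) {0..2 * pi}"
proof (induction x)
  case Nil
  then show ?case
    by (simp add: rho_def[abs_def] rho_mean_def)
next
  case (Cons cw x)
  obtain c w where cw: "cw = (c, w)"
    by (cases cw) auto
  have "((\<lambda>\<theta>. \<Prod>g\<leftarrow>w. rho_gen g \<theta>) has_integral 2 * pi * word_mean w) {0..2 * pi}"
  proof (cases "GB \<in> set w")
    case False
    then show ?thesis
      using has_integral_exp_int[of "word_degree w"]
      by (cases "word_degree w = 0") (simp_all add: rho_word word_mean_def)
  qed (simp add: rho_word word_mean_def)
  then have "((\<lambda>\<theta>. c * (\<Prod>g\<leftarrow>w. rho_gen g \<theta>) + rho x \<theta>) has_integral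
               c * (2 * pi * word_mean w) + 2 * pi * rho_mean x) {0..2 * pi}"
    by (intro has_integral_add has_integral_mult_right Cons.IH)
  then show ?case
    unfolding cw by (simp add: rho_def[abs_def] rho_mean_def algebra_simps)
qed

section \<open>Summation over blocks of fixed \<open>l\<close>\<close>

definition block :: "nat \<Rightarrow> idx set" where
  "block n = {j. valid j \<and> fst (snd j) = n}"

lemma block_eq: "block n = (\<lambda>(s, k). (s, n, k)) ` (UNIV \<times> {- int n - 1..int n})"
  unfolding block_def valid_def by (auto simp: image_iff)

lemma inj_on_block_param: "inj_on (\<lambda>(s, k). (s, n, k)) A"
  by (auto simp: inj_on_def)

lemma finite_block: "finite (block n)"
  unfolding block_eq by simp

lemma card_block: "card (block n) = 4 * (n + 1)"
  unfolding block_eq by (simp add: card_image inj_on_block_param card_cartesian_product)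

lemma lval_block: "j \<in> block n \<Longrightarrow> lval j + 1/2 = real n + 1"
  unfolding block_def lval_def by (cases j) auto

lemma UN_block: "(\<Union>n. block n) = {j. valid j}"
  unfolding block_def by auto

lemma disjoint_family_block: "disjoint_family block"
  unfolding disjoint_family_on_def block_def by auto

lemma sum_block_powr_le:
  assumes q: "0 < q" "q < 1"
  shows "(\<Sum>j\<in>block n. q powr l_plus_m j) \<le> 2 / (1 - q)"
proof -
  have "(\<Sum>j\<in>block n. q powr l_plus_m j)
          = (\<Sum>p\<in>UNIV \<times> {- int n - 1..int n}. q powr l_plus_m ((\<lambda>(s, k). (s, n, k)) p))"
    unfolding block_eq by (simp add: sum.reindex[OF inj_on_block_param])
  also have "\<dots> = (\<Sum>(s, k)\<in>(UNIV :: bool set) \<times> {- int n - 1..int n}. q ^ nat (k + int n + 1))"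
  proof -
    have "q powr l_plus_m (s, n, k) = q ^ nat (k + int n + 1)" if "k \<in> {- int n - 1..int n}" for s k
    proof -
      have "real (nat (k + int n + 1)) = real n + real_of_int k + 1"
        using that by simp
      then show ?thesis
        using q by (simp add: l_plus_m_def powr_realpow[symmetric])
    qed
    then show ?thesis
      by (intro sum.cong) auto
  qed
  also have "\<dots> = 2 * (\<Sum>k\<in>{- int n - 1..int n}. q ^ nat (k + int n + 1))"
    by (simp add: sum.cartesian_product[symmetric])
  also have "(\<Sum>k\<in>{- int n - 1..int n}. q ^ nat (k + int n + 1)) = (\<Sum>p<2 * n + 2. q ^ p)"
    by (rule sum.reindex_bij_witness[of _ "\<lambda>p. int p - int n - 1" "\<lambda>k. nat (k + int n + 1)"]) auto
  also have "\<dots> \<le> (\<Sum>p. q ^ p)"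
    using q by (intro sum_le_suminf summable_geometric) auto
  also have "\<dots> = 1 / (1 - q)"
    using q by (simp add: suminf_geometric)
  finally show ?thesis
    by simp
qed

definition block_error :: "real \<Rightarrow> ncpoly \<Rightarrow> nat \<Rightarrow> complex" where
  "block_error q x n = (\<Sum>j\<in>block n. pi_entry q x j j - rho_mean x)"

lemma block_error_bounded:
  assumes q: "0 < q" "q < 1"
  shows "\<exists>K. \<forall>n. norm (block_error q x n) \<le> K"
proof -
  obtain C where C: "0 \<le> C" "\<And>j. valid j \<Longrightarrow> norm (pi_entry q x j j - rho_mean x) \<le> C * q powr l_plus_m j"
    using pi_entry_diag_approx[OF q] by blast
  have "norm (block_error q x n) \<le> C * (2 / (1 - q))" for n
  proof -
    have "norm (block_error q x n) \<le> (\<Sum>j\<in>block n. C * q powr l_plus_m j)"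
      unfolding block_error_def using C(2) by (intro sum_norm_le) (auto simp: block_def)
    also have "\<dots> \<le> C * (2 / (1 - q))"
      unfolding sum_distrib_left[symmetric] using mult_left_mono[OF sum_block_powr_le[OF q] C(1)] .
    finally show ?thesis .
  qed
  then show ?thesis
    by blast
qed

lemma block_diag_sum:
  "(\<Sum>j\<in>block n. pi_entry q x j j * of_real (lval j + 1/2) powr (- s))
     = 4 * rho_mean x * of_real (real n + 1) powr (1 - s) + block_error q x n * of_real (real n + 1) powr (- s)"
proof -
  have "(\<Sum>j\<in>block n. pi_entry q x j j * of_real (lval j + 1/2) powr (- s))
          = (\<Sum>j\<in>block n. pi_entry q x j j) * of_real (real n + 1) powr (- s)"
    by (simp add: lval_block sum_distrib_right)
  also have "\<dots> = (4 * of_real (real n + 1) * rho_mean x + block_error q x n) * of_real (real n + 1) powr (- s)"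
    by (simp add: block_error_def sum_subtractf card_block)
  also have "\<dots> = 4 * rho_mean x * (of_real (real n + 1) * of_real (real n + 1) powr (- s))
                   + block_error q x n * of_real (real n + 1) powr (- s)"
    by (simp add: algebra_simps)
  also have "of_real (real n + 1) * of_real (real n + 1) powr (- s) = (of_real (real n + 1) powr (1 - s) :: complex)"
    by (simp add: powr_diff powr_minus divide_inverse)
  finally show ?thesis .
qed

lemma zeta_block_sums:
  assumes q: "0 < q" "q < 1" and s: "2 < Re s"
  shows "(\<lambda>n. \<Sum>j\<in>block n. pi_entry q x j j * of_real (lval j + 1/2) powr (- s)) sums zeta q x s"
proof -
  obtain B where B: "\<And>j. valid j \<Longrightarrow> norm (pi_entry q x j j) \<le> B"
    using pi_entry_diag_bounded[OF q] by blast
  have bound: "(\<Sum>j\<in>block n. norm (pi_entry q x j j * of_real (lval j + 1/2) powr (- s)))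
          \<le> 4 * B * (real n + 1) powr (1 - Re s)" for n
  proof -
    have norm_powr: "norm (complex_of_real (real n + 1) powr (- s)) = (real n + 1) powr (- Re s)"
      using norm_shifted_powr[of n "- s"] by simp
    have "norm (pi_entry q x j j * of_real (lval j + 1/2) powr (- s)) \<le> B * (real n + 1) powr (- Re s)"
      if "j \<in> block n" for j
      unfolding norm_mult lval_block[OF that] norm_powr
      using that by (intro mult_right_mono B) (auto simp: block_def)
    then have "(\<Sum>j\<in>block n. norm (pi_entry q x j j * of_real (lval j + 1/2) powr (- s)))
            \<le> (\<Sum>j\<in>block n. B * (real n + 1) powr (- Re s))"
      by (rule sum_mono)
    also have "\<dots> = 4 * B * ((real n + 1) * (real n + 1) powr (- Re s))"
      by (simp add: card_block algebra_simps)
    also have "(real n + 1) * (real n + 1) powr (- Re s) = (real n + 1) powr (1 - Re s)"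
      by (simp add: powr_diff powr_minus divide_inverse)
    finally show ?thesis .
  qed
  have "summable (\<lambda>n. 4 * B * (real n + 1) powr (1 - Re s))"
    using s by (intro summable_mult summable_shifted_powr) simp
  then have "summable (\<lambda>n. \<Sum>j\<in>block n. norm (pi_entry q x j j * of_real (lval j + 1/2) powr (- s)))"
    by (rule summable_comparison_test'[where N = 0]) (simp add: bound sum_nonneg del: of_real_add)
  from sums_infsum_finite_blocks[OF finite_block disjoint_family_block this]
  show ?thesis
    unfolding UN_block zeta_def .
qed

lemma block_error_series_holomorphic:
  assumes q: "0 < q" "q < 1"
  obtains F where "F holomorphic_on ball 2 (1/2)"
    "\<And>s. s \<in> ball 2 (1/2) \<Longrightarrow> (\<lambda>n. block_error q x n * of_real (real n + 1) powr (- s)) sums F s"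
proof -
  obtain K where K: "\<And>n. norm (block_error q x n) \<le> K"
    using block_error_bounded[OF q] by blast
  have bound: "norm (block_error q x n * of_real (real n + 1) powr (- s)) \<le> K * (real n + 1) powr (-3/2)"
    if "s \<in> ball 2 (1/2)" for n s
    unfolding norm_mult norm_shifted_powr
    using K Re_gt_three_halves[OF that] order_trans[OF norm_ge_zero K]
    by (intro mult_mono powr_mono) auto
  have summable: "summable (\<lambda>n. K * (real n + 1) powr (-3/2))"
    by (intro summable_mult summable_shifted_powr) simp
  have holomorphic: "(\<lambda>s. block_error q x n * of_real (real n + 1) powr (- s)) holomorphic_on ball 2 (1/2)" for n
    by (intro holomorphic_intros)
  show ?thesis
    using holomorphic_on_sums_dominated[OF open_ball holomorphic summable bound] that by metis
qed

lemma zeta_continuation: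
  assumes q: "0 < q" "q < 1"
  obtains G F where "G holomorphic_on ball 2 (1/2)" "F holomorphic_on ball 2 (1/2)" "G 2 = 0"
    "\<And>s. s \<in> ball 2 (1/2) \<Longrightarrow> 2 < Re s \<Longrightarrow> zeta q x s = 4 * rho_mean x * (1 + G s) / (s - 2) + F s"
proof -
  obtain G where G: "G holomorphic_on ball 2 (1/2)" "G 2 = 0"
    "\<And>s. s \<in> ball 2 (1/2) \<Longrightarrow> 2 < Re s \<Longrightarrow> (\<lambda>n. of_real (real n + 1) powr (1 - s)) sums ((1 + G s) / (s - 2))"
    using shifted_zeta_pole by blast
  obtain F where F: "F holomorphic_on ball 2 (1/2)"
    "\<And>s. s \<in> ball 2 (1/2) \<Longrightarrow> (\<lambda>n. block_error q x n * of_real (real n + 1) powr (- s)) sums F s"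
    using block_error_series_holomorphic[OF q] by blast
  have "zeta q x s = 4 * rho_mean x * (1 + G s) / (s - 2) + F s" if "s \<in> ball 2 (1/2)" "2 < Re s" for s
  proof -
    have "(\<lambda>n. 4 * rho_mean x * of_real (real n + 1) powr (1 - s) + block_error q x n * of_real (real n + 1) powr (- s))
            sums zeta q x s"
      using zeta_block_sums[OF q that(2)] by (simp only: block_diag_sum)
    moreover have "(\<lambda>n. 4 * rho_mean x * of_real (real n + 1) powr (1 - s) + block_error q x n * of_real (real n + 1) powr (- s))
            sums (4 * rho_mean x * ((1 + G s) / (s - 2)) + F s)"
      using G(3)[OF that] F(2)[OF that(1)] by (intro sums_add sums_mult)
    ultimately show ?thesis
      using sums_unique2 by fastforce
  qed
  then show ?thesis
    using that G(1,2) F(1) by blast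
qed

theorem mainTheorem10:
  fixes q :: real and x :: ncpoly
  assumes "0 < q" and "q < 1"
  shows "\<exists>f r. r > 0 \<and> f holomorphic_on (ball 2 r - {2})
           \<and> (\<forall>s\<in>ball 2 r. Re s > 2 \<longrightarrow> f s = zeta q x s)
           \<and> residue f 2 = complex_of_real (2 / pi) * integral {0..2*pi} (rho x)"
proof -
  obtain G F where G: "G holomorphic_on ball 2 (1/2)" "G 2 = 0" and F: "F holomorphic_on ball 2 (1/2)"
    and zeta: "\<And>s. s \<in> ball 2 (1/2) \<Longrightarrow> 2 < Re s \<Longrightarrow> zeta q x s = 4 * rho_mean x * (1 + G s) / (s - 2) + F s"
    using zeta_continuation[OF assms] by metis
  define f where "f = (\<lambda>s. 4 * rho_mean x * (1 + G s) / (s - 2) + F s)"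
  have "f holomorphic_on ball 2 (1/2) - {2}"
    unfolding f_def using G(1) F by (auto intro!: holomorphic_intros intro: holomorphic_on_subset)
  moreover have "(\<lambda>s. 4 * rho_mean x * (1 + G s)) holomorphic_on ball 2 (1/2)"
    using G(1) by (intro holomorphic_intros)
  then have "residue f 2 = 4 * rho_mean x"
    unfolding f_def using residue_simple_pole_add_holomorphic[OF open_ball _ _ F] G(2) by simp
  moreover have "complex_of_real (2 / pi) * integral {0..2*pi} (rho x) = 4 * rho_mean x"
    using integral_unique[OF rho_has_integral[of x]] by simp
  moreover have "\<forall>s\<in>ball 2 (1/2). Re s > 2 \<longrightarrow> f s = zeta q x s"
    using zeta by (simp add: f_def)
  ultimately show ?thesis
    by (intro exI[of _ f] exI[of _ "1/2"]) auto
qed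

end
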